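(* Let $P\in\mathfrak N_2$, let $r:P\to R$ be a retraction with $r[P(0)]=R(0)\subseteq P(0)$, and let $f:P(0)\to P(0)$ be an idempotent map with $|f[P(0)]|=|R(0)|$. Then there is a retraction $s:P\to S$ with $S\cong R$ and $s(x)=f(x)$ for all $x\in P(0)$.
   Context: All posets are finite; $h_P$ is the height; level sets $P(0)=\min P$, $P(k+1)=\min(P\setminus\bigcup_{i\le k}P(i))$; $R(0)$ is the set of minimal elements of $R$. $A<B$ means $a<b$ for all $a\in A,b\in B$. A retraction $r:P\to R$ is an idempotent order-preserving self-map of $P$ with image $R$. A section of width three is a poset $P$ of height $h_P\ge1$ with carrier $\{c_{k,j}:k\in[0,h_P],j\in\{0,1,2\}\}$ such that: $c_{0,j}<\dots<c_{h_P,j}$ for each $j$; each $\{c_{k,0},c_{k,1},c_{k,2}\}$ is an antichain; $c_{k,i}<c_{\ell,j}\Rightarrow c_{k,i+1}<c_{\ell,j+1}$ (indices mod 3); and for no $k$ is $P(k)<P(k+1)$. It is nice if for all $x<y$: $\{z:z>x\}\not\subseteq\{z:z\ge y\}$ and $\{z:z<y\}\not\subseteq\{z:z\le x\}$. $\mathfrak N_2$ is the class of nice sections of width three of height $\ge2$ with horizon 2, i.e. $P(k)<P(\ell)$ whenever $\ell\ge k+2$, and not $P(k)<P(k+1)$ for any $k$. *)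

theory Defs
  imports Main
begin

definition poset_on :: "'a set \<Rightarrow> ('a \<Rightarrow> 'a \<Rightarrow> bool) \<Rightarrow> bool" where
  "poset_on A le \<longleftrightarrow>
     (\<forall>x\<in>A. le x x) \<and>
     (\<forall>x\<in>A. \<forall>y\<in>A. le x y \<and> le y x \<longrightarrow> x = y) \<and>
     (\<forall>x\<in>A. \<forall>y\<in>A. \<forall>z\<in>A. le x y \<and> le y z \<longrightarrow> le x z)"

definition lt :: "('a \<Rightarrow> 'a \<Rightarrow> bool) \<Rightarrow> 'a \<Rightarrow> 'a \<Rightarrow> bool" where
  "lt le x y \<longleftrightarrow> le x y \<and> x \<noteq> y"

definition is_chain :: "'a set \<Rightarrow> ('a \<Rightarrow> 'a \<Rightarrow> bool) \<Rightarrow> bool" where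
  "is_chain C le \<longleftrightarrow> (\<forall>x\<in>C. \<forall>y\<in>C. le x y \<or> le y x)"

definition height :: "'a set \<Rightarrow> ('a \<Rightarrow> 'a \<Rightarrow> bool) \<Rightarrow> nat" where
  "height A le = Max {card C - 1 | C. C \<subseteq> A \<and> C \<noteq> {} \<and> is_chain C le}"

definition min_set :: "'a set \<Rightarrow> ('a \<Rightarrow> 'a \<Rightarrow> bool) \<Rightarrow> 'a set" where
  "min_set B le = {x\<in>B. \<not> (\<exists>y\<in>B. lt le y x)}"

text \<open>rest A le k = A minus the union of the levels P(0),...,P(k-1).\<close>
fun rest :: "'a set \<Rightarrow> ('a \<Rightarrow> 'a \<Rightarrow> bool) \<Rightarrow> nat \<Rightarrow> 'a set" where
  "rest A le 0 = A"
| "rest A le (Suc k) = rest A le k - min_set (rest A le k) le"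

definition level :: "'a set \<Rightarrow> ('a \<Rightarrow> 'a \<Rightarrow> bool) \<Rightarrow> nat \<Rightarrow> 'a set" where
  "level A le k = min_set (rest A le k) le"

definition set_less :: "('a \<Rightarrow> 'a \<Rightarrow> bool) \<Rightarrow> 'a set \<Rightarrow> 'a set \<Rightarrow> bool" where
  "set_less le X Y \<longleftrightarrow> (\<forall>x\<in>X. \<forall>y\<in>Y. lt le x y)"

definition section3 :: "'a set \<Rightarrow> ('a \<Rightarrow> 'a \<Rightarrow> bool) \<Rightarrow> bool" where
  "section3 A le \<longleftrightarrow> finite A \<and> poset_on A le \<and> height A le \<ge> 1 \<and>
     (\<exists>c :: nat \<Rightarrow> nat \<Rightarrow> 'a.
        A = {c k j | k j. k \<le> height A le \<and> j < 3} \<and>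
        (\<forall>j<3. \<forall>k<height A le. lt le (c k j) (c (Suc k) j)) \<and>
        (\<forall>k\<le>height A le. \<forall>i<3. \<forall>j<3. i \<noteq> j \<longrightarrow> \<not> le (c k i) (c k j)) \<and>
        (\<forall>k\<le>height A le. \<forall>l\<le>height A le. \<forall>i<3. \<forall>j<3.
            lt le (c k i) (c l j) \<longrightarrow> lt le (c k ((i+1) mod 3)) (c l ((j+1) mod 3)))) \<and>
     (\<forall>k<height A le. \<not> set_less le (level A le k) (level A le (Suc k)))"

definition nice :: "'a set \<Rightarrow> ('a \<Rightarrow> 'a \<Rightarrow> bool) \<Rightarrow> bool" where
  "nice A le \<longleftrightarrow> (\<forall>x\<in>A. \<forall>y\<in>A. lt le x y \<longrightarrow>
      \<not> ({z\<in>A. lt le x z} \<subseteq> {z\<in>A. le y z}) \<and>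
      \<not> ({z\<in>A. lt le z y} \<subseteq> {z\<in>A. le z x}))"

definition N2 :: "'a set \<Rightarrow> ('a \<Rightarrow> 'a \<Rightarrow> bool) \<Rightarrow> bool" where
  "N2 A le \<longleftrightarrow> section3 A le \<and> nice A le \<and> height A le \<ge> 2 \<and>
     (\<forall>k l. k + 2 \<le> l \<longrightarrow> set_less le (level A le k) (level A le l))"

definition retraction :: "'a set \<Rightarrow> ('a \<Rightarrow> 'a \<Rightarrow> bool) \<Rightarrow> ('a \<Rightarrow> 'a) \<Rightarrow> 'a set \<Rightarrow> bool" where
  "retraction A le r R \<longleftrightarrow>
     (\<forall>x\<in>A. r x \<in> A) \<and> (\<forall>x\<in>A. r (r x) = r x) \<and>
     (\<forall>x\<in>A. \<forall>y\<in>A. le x y \<longrightarrow> le (r x) (r y)) \<and> r ` A = R"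

definition order_iso :: "('a \<Rightarrow> 'a \<Rightarrow> bool) \<Rightarrow> 'a set \<Rightarrow> 'a set \<Rightarrow> bool" where
  "order_iso le S R \<longleftrightarrow> (\<exists>g. bij_betw g S R \<and> (\<forall>x\<in>S. \<forall>y\<in>S. le x y \<longleftrightarrow> le (g x) (g y)))"

end

theory Submission
  imports Defs
begin

text \<open>Every permutation of the bottom level P(0) = {c 0 0, c 0 1, c 0 2} extends to an order
  automorphism of P. Levels at distance at least two are completely comparable, and between
  consecutive levels k, k+1 the cyclic symmetry of the section makes the comparabilities depend
  only on the set of offsets d with c k 0 \<le> c (k+1) d; as P(k) < P(k+1) fails, this set is {0},
  {0,1} or {0,2}. Hence rotating all rows by the same amount is an automorphism, and so is a
  reflection of the rows, provided row k is shifted by the accumulated offsets of the rows below.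
  Idempotent self-maps of a three-element set with images of equal size are conjugate by a
  permutation, so r restricted to P(0) and f are conjugate by some automorphism \<phi>, and
  \<phi> \<circ> r \<circ> \<phi>\<inverse> is the required retraction.\<close>

section \<open>Conjugating retractions by order automorphisms\<close>

definition order_automorphism :: "'a set \<Rightarrow> ('a \<Rightarrow> 'a \<Rightarrow> bool) \<Rightarrow> ('a \<Rightarrow> 'a) \<Rightarrow> bool" where
  "order_automorphism A le \<phi> \<longleftrightarrow> bij_betw \<phi> A A \<and> (\<forall>x\<in>A. \<forall>y\<in>A. le x y \<longleftrightarrow> le (\<phi> x) (\<phi> y))"

lemma order_automorphism_from_indices:
  assumes c: "inj_on c I" and \<tau>: "bij_betw \<tau> I I"
    and iso: "\<forall>x\<in>I. \<forall>y\<in>I. le (c x) (c y) \<longleftrightarrow> le (c (\<tau> x)) (c (\<tau> y))"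
  obtains \<phi> where "order_automorphism (c ` I) le \<phi>" and "\<forall>x\<in>I. \<phi> (c x) = c (\<tau> x)"
proof
  let ?\<phi> = "c \<circ> \<tau> \<circ> inv_into I c"
  have c_bij: "bij_betw c I (c ` I)" using c by (simp add: bij_betw_imageI)
  have inv_c: "inv_into I c (c x) = x" if "x \<in> I" for x using c that by simp
  show "\<forall>x\<in>I. ?\<phi> (c x) = c (\<tau> x)" by (simp add: inv_c)
  have "bij_betw ?\<phi> (c ` I) (c ` I)"
    using bij_betw_trans[OF bij_betw_trans[OF bij_betw_inv_into[OF c_bij] \<tau>] c_bij]
    by (simp add: comp_assoc)
  moreover have "le x y \<longleftrightarrow> le (?\<phi> x) (?\<phi> y)" if xy: "x \<in> c ` I" "y \<in> c ` I" for x y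
  proof -
    obtain x' y' where x'y': "x' \<in> I" "y' \<in> I" "x = c x'" "y = c y'" using xy by blast
    then have "le (c x') (c y') \<longleftrightarrow> le (c (\<tau> x')) (c (\<tau> y'))" using iso by blast
    then show ?thesis using x'y' by (simp add: inv_c)
  qed
  ultimately show "order_automorphism (c ` I) le ?\<phi>"
    unfolding order_automorphism_def by blast
qed

lemma order_automorphism_inv:
  assumes "order_automorphism A le \<phi>"
  shows "order_automorphism A le (inv_into A \<phi>)"
proof -
  have bij: "bij_betw \<phi> A A" and iso: "\<forall>x\<in>A. \<forall>y\<in>A. le x y \<longleftrightarrow> le (\<phi> x) (\<phi> y)"
    using assms unfolding order_automorphism_def by auto
  have inv_bij: "bij_betw (inv_into A \<phi>) A A" by (rule bij_betw_inv_into[OF bij])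
  have "le x y \<longleftrightarrow> le (inv_into A \<phi> x) (inv_into A \<phi> y)" if "x \<in> A" "y \<in> A" for x y
  proof -
    have "le (\<phi> (inv_into A \<phi> x)) (\<phi> (inv_into A \<phi> y)) \<longleftrightarrow> le (inv_into A \<phi> x) (inv_into A \<phi> y)"
      using iso inv_bij that by (meson bij_betwE)
    then show ?thesis using bij that by (simp add: bij_betw_inv_into_right)
  qed
  with inv_bij show ?thesis unfolding order_automorphism_def by blast
qed

lemma order_iso_automorphism_image:
  assumes "order_automorphism A le \<phi>" and "R \<subseteq> A"
  shows "order_iso le (\<phi> ` R) R"
proof -
  have bij: "bij_betw \<phi> A A" using assms(1) unfolding order_automorphism_def by blast
  then have "\<phi> ` R \<subseteq> A" using assms(2) by (meson bij_betwE image_subsetI subsetD)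
  then show ?thesis
    using order_automorphism_inv[OF assms(1)] bij_betw_inv_into_subset[OF bij assms(2) refl]
    unfolding order_iso_def order_automorphism_def by (meson subsetD)
qed

lemma retraction_conjugate:
  assumes aut: "order_automorphism A le \<phi>" and r: "retraction A le r R"
  shows "retraction A le (\<phi> \<circ> r \<circ> inv_into A \<phi>) (\<phi> ` R)"
  unfolding retraction_def
proof (intro conjI ballI impI)
  let ?\<psi> = "inv_into A \<phi>"
  have bij: "bij_betw \<phi> A A" and iso: "\<forall>x\<in>A. \<forall>y\<in>A. le x y \<longleftrightarrow> le (\<phi> x) (\<phi> y)"
    using aut unfolding order_automorphism_def by auto
  have \<psi>_bij: "bij_betw ?\<psi> A A" and \<psi>_iso: "\<forall>x\<in>A. \<forall>y\<in>A. le x y \<longleftrightarrow> le (?\<psi> x) (?\<psi> y)"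
    using order_automorphism_inv[OF aut] unfolding order_automorphism_def by auto
  have rA: "\<forall>x\<in>A. r x \<in> A" and r_idem: "\<forall>x\<in>A. r (r x) = r x"
    and r_mono: "\<forall>x\<in>A. \<forall>y\<in>A. le x y \<longrightarrow> le (r x) (r y)" and R: "r ` A = R"
    using r unfolding retraction_def by auto
  have \<phi>A: "\<phi> x \<in> A" and \<psi>A: "?\<psi> x \<in> A" if "x \<in> A" for x
    using bij \<psi>_bij that by (meson bij_betwE)+
  have \<psi>\<phi>: "?\<psi> (\<phi> x) = x" if "x \<in> A" for x using bij that by (simp add: bij_betw_inv_into_left)
  show "(\<phi> \<circ> r \<circ> ?\<psi>) x \<in> A" if "x \<in> A" for x using that \<phi>A \<psi>A rA by simp
  show "(\<phi> \<circ> r \<circ> ?\<psi>) ((\<phi> \<circ> r \<circ> ?\<psi>) x) = (\<phi> \<circ> r \<circ> ?\<psi>) x" if "x \<in> A" for x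
    using that \<psi>\<phi> \<psi>A rA r_idem by simp
  show "le ((\<phi> \<circ> r \<circ> ?\<psi>) x) ((\<phi> \<circ> r \<circ> ?\<psi>) y)" if "x \<in> A" "y \<in> A" "le x y" for x y
  proof -
    have "le (r (?\<psi> x)) (r (?\<psi> y))" using that \<psi>_iso \<psi>A r_mono by blast
    moreover have "r (?\<psi> x) \<in> A" "r (?\<psi> y) \<in> A" using that \<psi>A rA by auto
    ultimately show ?thesis unfolding comp_apply using iso by blast
  qed
  show "(\<phi> \<circ> r \<circ> ?\<psi>) ` A = \<phi> ` R"
    using R bij_betw_imp_surj_on[OF \<psi>_bij] by (metis image_comp)
qed

lemma conjugate_retraction:
  assumes aut: "order_automorphism A le \<phi>" and r: "retraction A le r R"
    and B: "B \<subseteq> A" "\<phi> ` B = B" and comm: "\<forall>y\<in>B. \<phi> (r y) = f (\<phi> y)"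
  shows "\<exists>s S. retraction A le s S \<and> order_iso le S R \<and> (\<forall>x\<in>B. s x = f x)"
proof (intro exI conjI)
  show "retraction A le (\<phi> \<circ> r \<circ> inv_into A \<phi>) (\<phi> ` R)"
    using aut r by (rule retraction_conjugate)
  have "R \<subseteq> A" using r unfolding retraction_def by blast
  with aut show "order_iso le (\<phi> ` R) R" by (rule order_iso_automorphism_image)
  have bij: "bij_betw \<phi> A A" using aut unfolding order_automorphism_def by blast
  show "\<forall>x\<in>B. (\<phi> \<circ> r \<circ> inv_into A \<phi>) x = f x"
  proof
    fix x assume "x \<in> B"
    then obtain y where y: "y \<in> B" "x = \<phi> y" using B(2) by blast
    then have "inv_into A \<phi> x = y" using B(1) bij by (auto simp: bij_betw_inv_into_left)
    then show "(\<phi> \<circ> r \<circ> inv_into A \<phi>) x = f x" using comm y by simp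
  qed
qed

lemma all_less_3: "(\<forall>j<3. P j) \<longleftrightarrow> P 0 \<and> P 1 \<and> P (2::nat)"
  by (auto simp: less_Suc_eq numeral_3_eq_3 numeral_2_eq_2)

lemma ex_less_3: "(\<exists>j<3. P j) \<longleftrightarrow> P 0 \<or> P 1 \<or> P (2::nat)"
  by (auto simp: less_Suc_eq numeral_3_eq_3 numeral_2_eq_2)

lemma bij_betw_affine_mod3:
  assumes "u \<in> {1,2::nat}"
  shows "bij_betw (\<lambda>j. (u * j + b) mod 3) {..<3} {..<3}"
proof -
  have shift: "(u * j + b) mod 3 = (u * j + b mod 3) mod 3" for j
    by (simp add: mod_add_right_eq)
  have "inj_on (\<lambda>j. (u * j + b) mod 3) {..<3}"
  proof (rule inj_onI)
    fix i j assume "i \<in> {..<3::nat}" "j \<in> {..<3::nat}" and eq: "(u * i + b) mod 3 = (u * j + b) mod 3"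
    then have "i = 0 \<or> i = 1 \<or> i = 2" "j = 0 \<or> j = 1 \<or> j = 2" "u = 1 \<or> u = 2"
      "b mod 3 = 0 \<or> b mod 3 = 1 \<or> b mod 3 = 2"
      using assms by auto
    then show "i = j" using eq unfolding shift by (elim disjE) (simp_all add: numeral_2_eq_2)
  qed
  then show ?thesis
    by (simp add: bij_betw_def endo_inj_surj image_subsetI)
qed

lemma mod3_add_double_mod: "(x + 2 * (y mod 3)) mod 3 = (x + 2 * y) mod (3::nat)"
  by (metis mod_add_right_eq mod_mult_right_eq)

lemma mod3_rotation_difference:
  "((j + a) mod 3 + 2 * ((i + a) mod 3)) mod 3 = (j + 2 * i) mod (3::nat)"
proof -
  have "((j + a) mod 3 + 2 * ((i + a) mod 3)) mod 3 = (j + a + 2 * (i + a)) mod 3"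
    by (simp only: mod3_add_double_mod mod_simps)
  also have "j + a + 2 * (i + a) = j + 2 * i + 3 * a" by simp
  finally show ?thesis by simp
qed

lemma mod3_reflection_difference:
  "((2 * j + a + m + s) mod 3 + 2 * ((2 * i + a + m) mod 3)) mod 3
     = (s + 2 * ((j + 2 * i) mod 3)) mod (3::nat)"
proof -
  have "((2 * j + a + m + s) mod 3 + 2 * ((2 * i + a + m) mod 3)) mod 3
      = (2 * j + a + m + s + 2 * (2 * i + a + m)) mod 3"
    by (simp only: mod3_add_double_mod mod_simps)
  also have "2 * j + a + m + s + 2 * (2 * i + a + m) = s + 2 * (j + 2 * i) + 3 * (a + m)" by simp
  also have "(s + 2 * (j + 2 * i) + 3 * (a + m)) mod 3 = (s + 2 * (j + 2 * i)) mod 3"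
    by (metis mod_mult_self2)
  finally show ?thesis by (simp only: mod3_add_double_mod)
qed

section \<open>Idempotent self-maps of a three-element set\<close>

lemma idempotent_on_image_indices:
  assumes inj: "inj_on e {..<n}" and into: "\<forall>x\<in>e ` {..<n}. g x \<in> e ` {..<n}"
    and idem: "\<forall>x\<in>e ` {..<n}. g (g x) = g x"
  obtains p where "\<forall>j<n. p j < n" "\<forall>j<n. g (e j) = e (p j)" "\<forall>j<n. p (p j) = p j"
    "card (g ` e ` {..<n}) = card (p ` {..<n})"
proof -
  define p where "p j = (SOME i. i < n \<and> g (e j) = e i)" for j
  have p: "p j < n \<and> g (e j) = e (p j)" if "j < n" for j
    unfolding p_def by (rule someI_ex) (use into that in auto)
  have "p (p j) = p j" if "j < n" for j
  proof -
    have "e (p (p j)) = e (p j)" using p idem that by (metis image_eqI lessThan_iff)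
    then show ?thesis using inj p that by (meson inj_onD lessThan_iff)
  qed
  moreover have "g ` e ` {..<n} = e ` p ` {..<n}" using p by (auto simp: image_iff)
  then have "card (g ` e ` {..<n}) = card (p ` {..<n})"
    using p by (metis card_image image_subsetI inj inj_on_subset lessThan_iff)
  ultimately show thesis using that p by blast
qed

lemma idempotent_table_3:
  fixes xs :: "nat list"
  assumes "length xs = 3" and "\<forall>j<3. xs ! j < 3" and "\<forall>j<3. xs ! (xs ! j) = xs ! j"
  shows "xs \<in> {[0,0,0], [1,1,1], [2,2,2], [0,1,0], [0,1,1], [0,0,2], [0,2,2], [1,1,2], [2,1,2], [0,1,2]}"
proof -
  obtain x0 x1 x2 where xs: "xs = [x0, x1, x2]"
    using assms(1) by (auto simp: length_Suc_conv numeral_3_eq_3)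
  have "x0 = 0 \<or> x0 = 1 \<or> x0 = 2" "x1 = 0 \<or> x1 = 1 \<or> x1 = 2" "x2 = 0 \<or> x2 = 1 \<or> x2 = 2"
    using assms(2) unfolding xs all_less_3 by auto
  then show ?thesis
    using assms(3) unfolding xs all_less_3 by (elim disjE) simp_all
qed

lemma idempotent_tables_3_conjugate:
  fixes xs ys :: "nat list"
  assumes "xs \<in> {[0,0,0], [1,1,1], [2,2,2], [0,1,0], [0,1,1], [0,0,2], [0,2,2], [1,1,2], [2,1,2], [0,1,2]}"
    and "ys \<in> {[0,0,0], [1,1,1], [2,2,2], [0,1,0], [0,1,1], [0,0,2], [0,2,2], [1,1,2], [2,1,2], [0,1,2]}"
    and "card (set xs) = card (set ys)"
  shows "\<exists>u\<in>{1,2}. \<exists>a<3. \<forall>j<3. (u * xs ! j + a) mod 3 = ys ! ((u * j + a) mod 3)"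
  using assms unfolding insert_iff empty_iff all_less_3 ex_less_3
  by (elim disjE) (simp_all add: card_insert_if)

text \<open>Every permutation of {0,1,2} is affine modulo 3, so a conjugating permutation can be
  taken of the form j \<mapsto> u * j + a.\<close>

lemma idempotents_mod3_conjugate:
  fixes p q :: "nat \<Rightarrow> nat"
  assumes "\<forall>j<3. p j < 3" "\<forall>j<3. p (p j) = p j" "\<forall>j<3. q j < 3" "\<forall>j<3. q (q j) = q j"
    and "card (p ` {..<3}) = card (q ` {..<3})"
  shows "\<exists>u\<in>{1,2}. \<exists>a<3. \<forall>j<3. (u * p j + a) mod 3 = q ((u * j + a) mod 3)"
proof -
  have table: "map g [0..<3] \<in> {[0,0,0], [1,1,1], [2,2,2], [0,1,0], [0,1,1], [0,0,2], [0,2,2],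
      [1,1,2], [2,1,2], [0,1,2]}" if "\<forall>j<3. g j < 3" "\<forall>j<3. g (g j) = g j" for g :: "nat \<Rightarrow> nat"
    by (rule idempotent_table_3) (use that in auto)
  have card: "card (set (map p [0..<3])) = card (set (map q [0..<3]))"
    using assms(5) by (simp add: atLeast0LessThan)
  obtain u a where "u \<in> {1,2}" "a < 3"
    and "\<forall>j<3. (u * map p [0..<3] ! j + a) mod 3 = map q [0..<3] ! ((u * j + a) mod 3)"
    using idempotent_tables_3_conjugate[OF table[OF assms(1,2)] table[OF assms(3,4)] card] by blast
  then show ?thesis by auto
qed

section \<open>Sections of width three with horizon two\<close>

locale width3_section =
  fixes A :: "'a set" and le :: "'a \<Rightarrow> 'a \<Rightarrow> bool" and c :: "nat \<Rightarrow> nat \<Rightarrow> 'a" and h :: nat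
  assumes poset: "poset_on A le"
    and carrier: "A = {c k j | k j. k \<le> h \<and> j < 3}"
    and column_lt: "\<forall>j<3. \<forall>k<h. lt le (c k j) (c (Suc k) j)"
    and row_antichain: "\<forall>k\<le>h. \<forall>i<3. \<forall>j<3. i \<noteq> j \<longrightarrow> \<not> le (c k i) (c k j)"
    and rotation: "\<forall>k\<le>h. \<forall>l\<le>h. \<forall>i<3. \<forall>j<3.
        lt le (c k i) (c l j) \<longrightarrow> lt le (c k ((i + 1) mod 3)) (c l ((j + 1) mod 3))"
    and not_full: "\<forall>k<h. \<not> set_less le (level A le k) (level A le (Suc k))"
    and horizon: "\<forall>k l. k + 2 \<le> l \<longrightarrow> set_less le (level A le k) (level A le l)"
begin

lemma c_mem: "k \<le> h \<Longrightarrow> j < 3 \<Longrightarrow> c k j \<in> A"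
  using carrier by auto

lemma le_refl_on: "x \<in> A \<Longrightarrow> le x x"
  using poset unfolding poset_on_def by blast

lemma le_antisym_on: "x \<in> A \<Longrightarrow> y \<in> A \<Longrightarrow> le x y \<Longrightarrow> le y x \<Longrightarrow> x = y"
  using poset unfolding poset_on_def by blast

lemma le_trans_on: "x \<in> A \<Longrightarrow> y \<in> A \<Longrightarrow> z \<in> A \<Longrightarrow> le x y \<Longrightarrow> le y z \<Longrightarrow> le x z"
  using poset unfolding poset_on_def by blast

lemma lt_trans_on: "x \<in> A \<Longrightarrow> y \<in> A \<Longrightarrow> z \<in> A \<Longrightarrow> lt le x y \<Longrightarrow> lt le y z \<Longrightarrow> lt le x z"
  unfolding lt_def using le_antisym_on le_trans_on by blast

lemma lt_column: "k < l \<Longrightarrow> l \<le> h \<Longrightarrow> j < 3 \<Longrightarrow> lt le (c k j) (c l j)"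
proof (induction l)
  case 0
  then show ?case by simp
next
  case (Suc l)
  have step: "lt le (c l j) (c (Suc l) j)" using column_lt Suc.prems by auto
  show ?case
  proof (cases "k = l")
    case True
    then show ?thesis using step by simp
  next
    case False
    then have "lt le (c k j) (c l j)" using Suc by simp
    then show ?thesis using lt_trans_on[OF c_mem c_mem c_mem _ step] Suc.prems by simp
  qed
qed

lemma not_le_lower_row:
  assumes "l < k" "k \<le> h" "i < 3" "j < 3"
  shows "\<not> le (c k i) (c l j)"
proof
  assume le_down: "le (c k i) (c l j)"
  have up: "lt le (c l i) (c k i)" using lt_column assms by simp
  have mem: "c l i \<in> A" "c k i \<in> A" "c l j \<in> A" using c_mem assms by auto
  have "le (c l i) (c l j)" using le_trans_on[OF mem] up le_down unfolding lt_def by blast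
  moreover have "l \<le> h" using assms by simp
  ultimately have "i = j" using row_antichain assms(3,4) by blast
  then show False using le_antisym_on[OF mem(1,2)] up le_down unfolding lt_def by blast
qed

lemma c_eqD:
  assumes "c k i = c l j" "k \<le> h" "l \<le> h" "i < 3" "j < 3"
  shows "k = l \<and> i = j"
proof -
  have le_kl: "le (c k i) (c l j)" and le_lk: "le (c l j) (c k i)"
    using le_refl_on c_mem assms by auto
  have "\<not> k < l" using not_le_lower_row[of k l j i] le_lk assms by auto
  moreover have "\<not> l < k" using not_le_lower_row[of l k i j] le_kl assms by auto
  ultimately have "k = l" by simp
  then show ?thesis using row_antichain le_kl assms by blast
qed

lemma le_iff_lt_other_row:
  "k \<noteq> l \<Longrightarrow> k \<le> h \<Longrightarrow> l \<le> h \<Longrightarrow> i < 3 \<Longrightarrow> j < 3 \<Longrightarrow> le (c k i) (c l j) \<longleftrightarrow> lt le (c k i) (c l j)"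
  using c_eqD unfolding lt_def by blast

lemma le_same_row_iff: "k \<le> h \<Longrightarrow> i < 3 \<Longrightarrow> j < 3 \<Longrightarrow> le (c k i) (c k j) \<longleftrightarrow> i = j"
  using row_antichain le_refl_on c_mem by blast

definition rows_from :: "nat \<Rightarrow> 'a set" where
  "rows_from k = {c l j | l j. k \<le> l \<and> l \<le> h \<and> j < 3}"

lemma min_set_rows_from:
  assumes "k \<le> h"
  shows "min_set (rows_from k) le = c k ` {..<3}"
proof
  show "min_set (rows_from k) le \<subseteq> c k ` {..<3}"
  proof
    fix x assume x: "x \<in> min_set (rows_from k) le"
    then obtain l j where lj: "x = c l j" "k \<le> l" "l \<le> h" "j < 3"
      unfolding min_set_def rows_from_def by auto
    have "c k j \<in> rows_from k" using assms lj(4) unfolding rows_from_def by blast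
    have "\<not> k < l"
    proof
      assume "k < l"
      then have "lt le (c k j) x" using lt_column lj by simp
      then show False using x \<open>c k j \<in> rows_from k\<close> unfolding min_set_def by blast
    qed
    then show "x \<in> c k ` {..<3}" using lj by auto
  qed
  show "c k ` {..<3} \<subseteq> min_set (rows_from k) le"
  proof
    fix x assume "x \<in> c k ` {..<3}"
    then obtain j where j: "x = c k j" "j < 3" by auto
    have "\<not> lt le y x" if y: "y \<in> rows_from k" for y
    proof
      assume y_lt: "lt le y x"
      obtain l i where li: "y = c l i" "k \<le> l" "l \<le> h" "i < 3"
        using y unfolding rows_from_def by auto
      show False
      proof (cases "l = k")
        case True
        then show False using row_antichain y_lt li j unfolding lt_def by auto
      next
        case False
        then show False using not_le_lower_row[of k l i j] y_lt li j unfolding lt_def by auto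
      qed
    qed
    moreover have "x \<in> rows_from k" using assms j unfolding rows_from_def by auto
    ultimately show "x \<in> min_set (rows_from k) le" unfolding min_set_def by auto
  qed
qed

lemma rest_eq_rows_from: "k \<le> h \<Longrightarrow> rest A le k = rows_from k"
proof (induction k)
  case 0
  then show ?case using carrier unfolding rows_from_def by simp
next
  case (Suc k)
  have "rest A le (Suc k) = rows_from k - c k ` {..<3}"
    using Suc min_set_rows_from by simp
  also have "\<dots> = rows_from (Suc k)"
  proof (intro set_eqI iffI)
    fix x assume x: "x \<in> rows_from k - c k ` {..<3}"
    then obtain l j where lj: "x = c l j" "k \<le> l" "l \<le> h" "j < 3"
      unfolding rows_from_def by blast
    then have "Suc k \<le> l" using x by (auto simp: Suc_le_eq order.order_iff_strict)
    then show "x \<in> rows_from (Suc k)" using lj unfolding rows_from_def by blast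
  next
    fix x assume "x \<in> rows_from (Suc k)"
    then obtain l j where lj: "x = c l j" "Suc k \<le> l" "l \<le> h" "j < 3"
      unfolding rows_from_def by blast
    have "x \<notin> c k ` {..<3}" using c_eqD[of l j k] lj Suc.prems by auto
    then show "x \<in> rows_from k - c k ` {..<3}" using lj unfolding rows_from_def by auto
  qed
  finally show ?case .
qed

lemma level_eq: "k \<le> h \<Longrightarrow> level A le k = c k ` {..<3}"
  unfolding level_def by (simp add: rest_eq_rows_from min_set_rows_from)

lemma lt_rows_apart:
  assumes "k + 2 \<le> l" "l \<le> h" "i < 3" "j < 3"
  shows "lt le (c k i) (c l j)"
proof -
  have "c k i \<in> level A le k" "c l j \<in> level A le l" using level_eq assms by auto
  then show ?thesis using horizon assms(1) unfolding set_less_def by blast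
qed

lemma le_next_row_shift:
  assumes "k < h" "i < 3" "j < 3" "le (c k i) (c (Suc k) j)"
  shows "le (c k ((i + n) mod 3)) (c (Suc k) ((j + n) mod 3))"
proof (induction n)
  case 0
  then show ?case using assms by simp
next
  case (Suc n)
  have "lt le (c k ((i + n) mod 3)) (c (Suc k) ((j + n) mod 3))"
    using Suc.IH le_iff_lt_other_row[of k "Suc k"] assms(1) by simp
  then have "lt le (c k (((i + n) mod 3 + 1) mod 3)) (c (Suc k) (((j + n) mod 3 + 1) mod 3))"
    using rotation[rule_format, of k "Suc k" "(i + n) mod 3" "(j + n) mod 3"] assms(1) by simp
  then show ?case unfolding lt_def by (simp add: mod_simps)
qed

text \<open>(j + 2 * i) mod 3 is j - i modulo 3.\<close>

lemma le_next_row_iff_offset: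
  assumes "k < h" "i < 3" "j < 3"
  shows "le (c k i) (c (Suc k) j) \<longleftrightarrow> le (c k 0) (c (Suc k) ((j + 2 * i) mod 3))"
proof
  assume "le (c k i) (c (Suc k) j)"
  from le_next_row_shift[OF assms this, of "2 * i"]
  show "le (c k 0) (c (Suc k) ((j + 2 * i) mod 3))" by simp
next
  assume "le (c k 0) (c (Suc k) ((j + 2 * i) mod 3))"
  from le_next_row_shift[OF assms(1) _ _ this, of i]
  have "le (c k (i mod 3)) (c (Suc k) (((j + 2 * i) mod 3 + i) mod 3))" by simp
  moreover have "((j + 2 * i) mod 3 + i) mod 3 = j"
  proof -
    have "((j + 2 * i) mod 3 + i) mod 3 = (j + 3 * i) mod 3" by (simp add: mod_simps)
    then show ?thesis using assms(3) by simp
  qed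
  ultimately show "le (c k i) (c (Suc k) j)" using assms(2) by simp
qed

lemma offsets_not_both:
  assumes "k < h"
  shows "\<not> (le (c k 0) (c (Suc k) 1) \<and> le (c k 0) (c (Suc k) 2))"
proof
  assume "le (c k 0) (c (Suc k) 1) \<and> le (c k 0) (c (Suc k) 2)"
  moreover have "le (c k 0) (c (Suc k) 0)" using column_lt assms unfolding lt_def by auto
  ultimately have "\<forall>d<3. le (c k 0) (c (Suc k) d)" unfolding all_less_3 by blast
  then have "lt le (c k i) (c (Suc k) j)" if "i < 3" "j < 3" for i j
    using le_next_row_iff_offset[OF assms that] le_iff_lt_other_row[of k "Suc k" i j] assms that by simp
  then have "set_less le (level A le k) (level A le (Suc k))"
    unfolding set_less_def using assms by (auto simp: level_eq)
  then show False using not_full assms by blast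
qed

definition reflection_shift :: "nat \<Rightarrow> nat" where
  "reflection_shift k = (if le (c k 0) (c (Suc k) 1) then 1 else if le (c k 0) (c (Suc k) 2) then 2 else 0)"

text \<open>The offsets d with c k 0 \<le> c (k+1) d form one of the sets {0}, {0,1}, {0,2}, so
  d \<mapsto> reflection_shift k - d maps them onto themselves.\<close>

lemma offset_reflection_invariant:
  assumes "k < h" "d < 3"
  shows "le (c k 0) (c (Suc k) d) \<longleftrightarrow> le (c k 0) (c (Suc k) ((reflection_shift k + 2 * d) mod 3))"
proof -
  have "le (c k 0) (c (Suc k) 0)" using column_lt assms(1) unfolding lt_def by auto
  moreover have "d = 0 \<or> d = 1 \<or> d = 2" using assms(2) by auto
  ultimately show ?thesis
    using offsets_not_both[OF assms(1)] unfolding reflection_shift_def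
    by (elim disjE; cases "le (c k 0) (c (Suc k) 1)"; cases "le (c k 0) (c (Suc k) 2)") (simp_all add: numeral_2_eq_2)
qed

text \<open>For u = 1 this is the rotation j \<mapsto> j + a of every row; for u = 2 it is the reflection
  j \<mapsto> a - j, which in row k has to be shifted by the reflection shifts of the rows below.\<close>

definition column_map :: "nat \<Rightarrow> nat \<Rightarrow> nat \<Rightarrow> nat \<Rightarrow> nat" where
  "column_map u a k j = (u * j + a + (if u = 1 then 0 else \<Sum>l<k. reflection_shift l)) mod 3"

lemma column_map_lt: "column_map u a k j < 3"
  unfolding column_map_def by simp

lemma bij_betw_column_map: "u \<in> {1,2} \<Longrightarrow> bij_betw (column_map u a k) {..<3} {..<3}"
  using bij_betw_affine_mod3 unfolding column_map_def by (simp add: add.assoc)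

lemma column_map_difference:
  assumes "u \<in> {1,2}"
  shows "(column_map u a (Suc k) j + 2 * column_map u a k i) mod 3
    = (if u = 1 then (j + 2 * i) mod 3 else (reflection_shift k + 2 * ((j + 2 * i) mod 3)) mod 3)"
proof (cases "u = 1")
  case True
  then show ?thesis unfolding column_map_def by (simp add: mod3_rotation_difference)
next
  case False
  then have "u = 2" using assms by simp
  then show ?thesis
    using mod3_reflection_difference[of j a "\<Sum>l<k. reflection_shift l" "reflection_shift k" i]
    unfolding column_map_def by (simp add: add.assoc)
qed

lemma le_column_map_iff:
  assumes u: "u \<in> {1,2}" and "k \<le> h" "l \<le> h" "i < 3" "j < 3"
  shows "le (c k i) (c l j) \<longleftrightarrow> le (c k (column_map u a k i)) (c l (column_map u a l j))"
proof -
  consider "k = l" | "l < k" | "l = Suc k" | "k + 2 \<le> l" by linarith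
  then show ?thesis
  proof cases
    case 1
    have "column_map u a k i = column_map u a k j \<longleftrightarrow> i = j"
      using bij_betw_column_map[OF u] assms(4,5) by (auto dest: bij_betw_imp_inj_on inj_onD)
    then show ?thesis
      unfolding 1 le_same_row_iff[OF assms(3,4,5)] le_same_row_iff[OF assms(3) column_map_lt column_map_lt]
      using 1 by simp
  next
    case 2
    then show ?thesis using not_le_lower_row assms column_map_lt by blast
  next
    case 3
    then have kh: "k < h" using assms by simp
    define d where "d = (j + 2 * i) mod 3"
    have "d < 3" unfolding d_def by simp
    have "le (c k i) (c l j) \<longleftrightarrow> le (c k 0) (c (Suc k) d)"
      unfolding 3 d_def by (rule le_next_row_iff_offset[OF kh assms(4,5)])
    moreover have "le (c k (column_map u a k i)) (c l (column_map u a l j))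
        \<longleftrightarrow> le (c k 0) (c (Suc k) (if u = 1 then d else (reflection_shift k + 2 * d) mod 3))"
      unfolding 3 le_next_row_iff_offset[OF kh column_map_lt column_map_lt]
        column_map_difference[OF u] d_def ..
    ultimately show ?thesis using offset_reflection_invariant[OF kh \<open>d < 3\<close>] by simp
  next
    case 4
    then show ?thesis using lt_rows_apart assms column_map_lt unfolding lt_def by blast
  qed
qed

lemma row0_affine_map_extends:
  assumes u: "u \<in> {1,2}"
  obtains \<phi> where "order_automorphism A le \<phi>" "\<forall>j<3. \<phi> (c 0 j) = c 0 ((u * j + a) mod 3)"
proof -
  let ?I = "{..h} \<times> {..<3::nat}"
  let ?\<tau> = "\<lambda>(k, j). (k, column_map u a k j)"
  have A: "A = case_prod c ` ?I" using carrier by auto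
  have "inj_on (case_prod c) ?I" using c_eqD by (auto intro!: inj_onI)
  moreover have "bij_betw ?\<tau> ?I ?I"
  proof -
    have "inj_on ?\<tau> ?I"
      using bij_betw_column_map[OF u] by (auto intro!: inj_onI dest: bij_betw_imp_inj_on inj_onD)
    moreover have "?\<tau> ` ?I \<subseteq> ?I" using column_map_lt by auto
    ultimately show ?thesis by (simp add: bij_betw_def endo_inj_surj)
  qed
  moreover have "\<forall>x\<in>?I. \<forall>y\<in>?I. le (case_prod c x) (case_prod c y)
      \<longleftrightarrow> le (case_prod c (?\<tau> x)) (case_prod c (?\<tau> y))"
    using le_column_map_iff[OF u] by auto
  ultimately obtain \<phi> where "order_automorphism A le \<phi>" "\<forall>x\<in>?I. \<phi> (case_prod c x) = case_prod c (?\<tau> x)"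
    unfolding A by (rule order_automorphism_from_indices)
  moreover have "column_map u a 0 j = (u * j + a) mod 3" for j
    unfolding column_map_def by simp
  ultimately show thesis using that by auto
qed

lemma bottom_level_idempotents_conjugate:
  assumes "\<forall>x\<in>level A le 0. g x \<in> level A le 0" "\<forall>x\<in>level A le 0. g (g x) = g x"
    and "\<forall>x\<in>level A le 0. g' x \<in> level A le 0" "\<forall>x\<in>level A le 0. g' (g' x) = g' x"
    and "card (g ` level A le 0) = card (g' ` level A le 0)"
  obtains \<phi> where "order_automorphism A le \<phi>" "\<phi> ` level A le 0 = level A le 0"
    "\<forall>y\<in>level A le 0. \<phi> (g y) = g' (\<phi> y)"
proof -
  have P0: "level A le 0 = c 0 ` {..<3}" by (simp add: level_eq)
  have inj: "inj_on (c 0) {..<3}" using c_eqD by (auto intro: inj_onI)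
  obtain p where p: "\<forall>j<3. p j < 3" "\<forall>j<3. g (c 0 j) = c 0 (p j)" "\<forall>j<3. p (p j) = p j"
      "card (g ` c 0 ` {..<3}) = card (p ` {..<3})"
    using idempotent_on_image_indices[OF inj assms(1,2)[unfolded P0]] by blast
  obtain q where q: "\<forall>j<3. q j < 3" "\<forall>j<3. g' (c 0 j) = c 0 (q j)" "\<forall>j<3. q (q j) = q j"
      "card (g' ` c 0 ` {..<3}) = card (q ` {..<3})"
    using idempotent_on_image_indices[OF inj assms(3,4)[unfolded P0]] by blast
  have "card (p ` {..<3}) = card (q ` {..<3})"
    using p(4) q(4) assms(5) unfolding P0 by simp
  then obtain u a where u: "u \<in> {1,2}" and ua: "\<forall>j<3. (u * p j + a) mod 3 = q ((u * j + a) mod 3)"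
    using idempotents_mod3_conjugate[OF p(1,3) q(1,3)] by blast
  obtain \<phi> where \<phi>: "order_automorphism A le \<phi>" "\<forall>j<3. \<phi> (c 0 j) = c 0 ((u * j + a) mod 3)"
    using row0_affine_map_extends[OF u] by blast
  have "\<phi> ` level A le 0 = c 0 ` (\<lambda>j. (u * j + a) mod 3) ` {..<3}"
    unfolding P0 image_image by (rule image_cong) (use \<phi>(2) in auto)
  also have "\<dots> = level A le 0"
    using bij_betw_imp_surj_on[OF bij_betw_affine_mod3[OF u]] P0 by simp
  finally have "\<phi> ` level A le 0 = level A le 0" .
  moreover have "\<forall>y\<in>level A le 0. \<phi> (g y) = g' (\<phi> y)"
    using p(1,2) q(2) ua \<phi>(2) unfolding P0 by auto
  ultimately show thesis using that \<phi>(1) by blast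
qed

end

lemma N2_width3_section:
  assumes "N2 A le"
  obtains c where "width3_section A le c (height A le)"
proof -
  have "section3 A le" and "\<forall>k l. k + 2 \<le> l \<longrightarrow> set_less le (level A le k) (level A le l)"
    using assms unfolding N2_def by auto
  then show thesis
    using that unfolding section3_def width3_section_def by (elim conjE exE) (simp only:)
qed

theorem corollary4p2:
  fixes A :: "'a set" and le :: "'a \<Rightarrow> 'a \<Rightarrow> bool"
    and r f :: "'a \<Rightarrow> 'a" and R :: "'a set"
  assumes "N2 A le"
    and "retraction A le r R"
    and "r ` level A le 0 = min_set R le"
    and "min_set R le \<subseteq> level A le 0"
    and "\<forall>x\<in>level A le 0. f x \<in> level A le 0"
    and "\<forall>x\<in>level A le 0. f (f x) = f x"
    and "card (f ` level A le 0) = card (min_set R le)"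
  shows "\<exists>s S. retraction A le s S \<and> order_iso le S R \<and> (\<forall>x\<in>level A le 0. s x = f x)"
proof -
  obtain c where "width3_section A le c (height A le)"
    using assms(1) by (rule N2_width3_section)
  then interpret width3_section A le c "height A le" .
  have P0_A: "level A le 0 \<subseteq> A" using level_eq c_mem by auto
  have r_P0: "\<forall>x\<in>level A le 0. r x \<in> level A le 0" "\<forall>x\<in>level A le 0. r (r x) = r x"
    using assms(2-4) P0_A unfolding retraction_def by auto
  have "card (r ` level A le 0) = card (f ` level A le 0)"
    using assms(3,7) by simp
  then obtain \<phi> where "order_automorphism A le \<phi>" "\<phi> ` level A le 0 = level A le 0"
      "\<forall>y\<in>level A le 0. \<phi> (r y) = f (\<phi> y)"
    by (rule bottom_level_idempotents_conjugate[OF r_P0 assms(5,6)])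
  then show ?thesis
    using conjugate_retraction[OF _ assms(2) P0_A] by blast
qed

end
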